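(* Let $G$ be a non-complete finite simple graph of order $n$ with $\delta(G)\geq 1$. Then $\alpha^*(G)\leq \frac{2(n-1)}{\sigma_2(G)}$.
   Context: $\sigma_2(G)=\min\{d_G(u)+d_G(v): u\neq v,\ uv\notin E(G)\}$. An independent set $I$ of $G$ is light if $\sum_{u\in I}d_G(u)\le |V(G)|-1$; $\alpha^*(G)$ is the maximum size of a light independent set of $G$. *)

theory Defs
  imports Complex_Main
begin

definition simple_graph :: "'a set \<Rightarrow> ('a \<Rightarrow> 'a \<Rightarrow> bool) \<Rightarrow> bool" where
  "simple_graph V E \<longleftrightarrow> finite V \<and> (\<forall>u v. E u v \<longrightarrow> u \<in> V \<and> v \<in> V)
     \<and> (\<forall>u v. E u v \<longrightarrow> E v u) \<and> (\<forall>u. \<not> E u u)"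

definition degree :: "'a set \<Rightarrow> ('a \<Rightarrow> 'a \<Rightarrow> bool) \<Rightarrow> 'a \<Rightarrow> nat" where
  "degree V E u = card {v \<in> V. E u v}"

definition min_degree :: "'a set \<Rightarrow> ('a \<Rightarrow> 'a \<Rightarrow> bool) \<Rightarrow> nat" where
  "min_degree V E = Min (degree V E ` V)"

definition complete_graph :: "'a set \<Rightarrow> ('a \<Rightarrow> 'a \<Rightarrow> bool) \<Rightarrow> bool" where
  "complete_graph V E \<longleftrightarrow> (\<forall>u\<in>V. \<forall>v\<in>V. u \<noteq> v \<longrightarrow> E u v)"

definition sigma2 :: "'a set \<Rightarrow> ('a \<Rightarrow> 'a \<Rightarrow> bool) \<Rightarrow> nat" where
  "sigma2 V E = Min {degree V E u + degree V E v | u v. u \<in> V \<and> v \<in> V \<and> u \<noteq> v \<and> \<not> E u v}"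

definition independent_set :: "'a set \<Rightarrow> ('a \<Rightarrow> 'a \<Rightarrow> bool) \<Rightarrow> 'a set \<Rightarrow> bool" where
  "independent_set V E I \<longleftrightarrow> I \<subseteq> V \<and> (\<forall>u\<in>I. \<forall>v\<in>I. \<not> E u v)"

definition light_independent_set :: "'a set \<Rightarrow> ('a \<Rightarrow> 'a \<Rightarrow> bool) \<Rightarrow> 'a set \<Rightarrow> bool" where
  "light_independent_set V E I \<longleftrightarrow> independent_set V E I
     \<and> (\<Sum>u\<in>I. degree V E u) + 1 \<le> card V"

text \<open>alpha^*(G): maximum size of a light independent set (the empty set is light,
so the set below is nonempty when V is nonempty).\<close>
definition alpha_star :: "'a set \<Rightarrow> ('a \<Rightarrow> 'a \<Rightarrow> bool) \<Rightarrow> nat" where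
  "alpha_star V E = Max {card I | I. light_independent_set V E I}"

end

theory Submission
  imports Defs
begin

text \<open>Take a light independent set \<open>I\<close> of maximum size \<open>k\<close>. If \<open>k \<ge> 2\<close>, any two vertices of \<open>I\<close>
  are non-adjacent, so every pair contributes at least \<open>\<sigma>\<^sub>2(G)\<close> to the degree sum;
  summing over all ordered pairs gives \<open>2(k - 1) \<Sum>\<^sub>I d \<ge> k(k - 1) \<sigma>\<^sub>2(G)\<close>, i.e.
  \<open>k \<sigma>\<^sub>2(G) \<le> 2 \<Sum>\<^sub>I d \<le> 2(n - 1)\<close> by lightness. For \<open>k \<le> 1\<close> it suffices that
  \<open>\<sigma>\<^sub>2(G) \<le> 2(n - 1)\<close>, as every degree is below \<open>n\<close>. The hypothesis \<open>\<delta>(G) \<ge> 1\<close> only makes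
  \<open>\<sigma>\<^sub>2(G)\<close> positive.\<close>

lemma card_mult_le_twice_sum:
  fixes f :: "'a \<Rightarrow> 'b::linordered_idom"
  assumes "finite I" and "card I \<ge> 2"
    and pair: "\<And>u v. u \<in> I \<Longrightarrow> v \<in> I \<Longrightarrow> u \<noteq> v \<Longrightarrow> s \<le> f u + f v"
  shows "of_nat (card I) * s \<le> 2 * sum f I"
proof -
  let ?k = "of_nat (card I) :: 'b"
  have "(?k - 1) * (?k * s) = (\<Sum>u\<in>I. \<Sum>v\<in>I - {u}. s)"
    using assms(1,2) by (simp add: of_nat_diff algebra_simps)
  also have "\<dots> \<le> (\<Sum>u\<in>I. \<Sum>v\<in>I - {u}. f u + f v)"
    using pair by (intro sum_mono) auto
  also have "\<dots> = (\<Sum>u\<in>I. (?k - 1) * f u + (sum f I - f u))"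
    using assms(1,2) by (intro sum.cong) (simp_all add: sum.distrib sum_diff1 of_nat_diff)
  also have "\<dots> = (?k - 1) * (2 * sum f I)"
    by (simp add: sum.distrib sum_subtractf sum_distrib_left sum_distrib_right algebra_simps)
  finally show ?thesis
    using assms(2) by (simp add: mult_le_cancel_left)
qed

lemma degree_le_card_minus_1:
  assumes "simple_graph V E" and "u \<in> V"
  shows "degree V E u \<le> card V - 1"
proof -
  have "{v \<in> V. E u v} \<subseteq> V - {u}"
    using assms(1) by (auto simp: simple_graph_def)
  then show ?thesis
    using assms by (auto simp: degree_def simple_graph_def card_Diff_singleton
        dest: card_mono[rotated])
qed

lemma min_degree_le_degree:
  assumes "simple_graph V E" and "u \<in> V"
  shows "min_degree V E \<le> degree V E u"
  using assms by (auto simp: min_degree_def simple_graph_def)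

lemma finite_non_adjacent_degree_sums:
  assumes "simple_graph V E"
  shows "finite {degree V E u + degree V E v | u v. u \<in> V \<and> v \<in> V \<and> u \<noteq> v \<and> \<not> E u v}"
proof -
  have "{degree V E u + degree V E v | u v. u \<in> V \<and> v \<in> V \<and> u \<noteq> v \<and> \<not> E u v}
      \<subseteq> (\<lambda>(u, v). degree V E u + degree V E v) ` (V \<times> V)"
    by auto
  then show ?thesis
    by (rule finite_subset) (use assms in \<open>simp add: simple_graph_def\<close>)
qed

lemma sigma2_le:
  assumes "simple_graph V E" and "u \<in> V" "v \<in> V" "u \<noteq> v" "\<not> E u v"
  shows "sigma2 V E \<le> degree V E u + degree V E v"
  unfolding sigma2_def
  using assms finite_non_adjacent_degree_sums[OF assms(1)] by (intro Min_le) auto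

lemma sigma2_attained:
  assumes "simple_graph V E" and "\<not> complete_graph V E"
  obtains u v where "u \<in> V" "v \<in> V" "u \<noteq> v" "\<not> E u v"
    and "sigma2 V E = degree V E u + degree V E v"
proof -
  have "sigma2 V E \<in> {degree V E u + degree V E v | u v. u \<in> V \<and> v \<in> V \<and> u \<noteq> v \<and> \<not> E u v}"
    unfolding sigma2_def
    using assms finite_non_adjacent_degree_sums[OF assms(1)]
    by (intro Min_in) (auto simp: complete_graph_def)
  then show ?thesis
    using that by blast
qed

lemma sigma2_le_twice_card_minus_1:
  assumes "simple_graph V E" and "\<not> complete_graph V E"
  shows "sigma2 V E \<le> 2 * (card V - 1)"
proof -
  obtain u v where "u \<in> V" "v \<in> V" and "sigma2 V E = degree V E u + degree V E v"
    using sigma2_attained[OF assms] .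
  then show ?thesis
    using degree_le_card_minus_1[OF assms(1) \<open>u \<in> V\<close>]
      degree_le_card_minus_1[OF assms(1) \<open>v \<in> V\<close>] by simp
qed

lemma sigma2_pos:
  assumes "simple_graph V E" and "\<not> complete_graph V E" and "min_degree V E \<ge> 1"
  shows "sigma2 V E > 0"
  using assms by (elim sigma2_attained) (auto dest: min_degree_le_degree[OF assms(1)])

lemma alpha_star_attained:
  assumes "simple_graph V E" and "V \<noteq> {}"
  obtains I where "light_independent_set V E I" and "alpha_star V E = card I"
proof -
  let ?A = "{card I | I. light_independent_set V E I}"
  have "?A \<subseteq> {0..card V}"
    using assms(1) by (auto simp: light_independent_set_def independent_set_def
        simple_graph_def intro: card_mono)
  then have "finite ?A"
    by (rule finite_subset) simp
  moreover have "light_independent_set V E {}"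
    using assms by (auto simp: light_independent_set_def independent_set_def
        simple_graph_def Suc_le_eq)
  ultimately have "alpha_star V E \<in> ?A"
    unfolding alpha_star_def by (intro Max_in) auto
  then show ?thesis
    using that by blast
qed

lemma light_independent_set_card_mult_sigma2_le:
  assumes "simple_graph V E" and "\<not> complete_graph V E"
    and "light_independent_set V E I"
  shows "real (card I) * real (sigma2 V E) \<le> 2 * (real (card V) - 1)"
proof -
  have "I \<subseteq> V" and indep: "\<And>u v. u \<in> I \<Longrightarrow> v \<in> I \<Longrightarrow> \<not> E u v"
    and light: "(\<Sum>u\<in>I. real (degree V E u)) \<le> real (card V) - 1"
    using assms(3) unfolding light_independent_set_def independent_set_def
    by (auto simp flip: of_nat_sum)
  then have "finite I"
    using assms(1) by (auto simp: simple_graph_def intro: finite_subset)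
  show ?thesis
  proof (cases "card I \<ge> 2")
    case True
    have "real (card I) * real (sigma2 V E) \<le> 2 * (\<Sum>u\<in>I. real (degree V E u))"
      using \<open>finite I\<close> True
    proof (rule card_mult_le_twice_sum)
      fix u v
      assume "u \<in> I" "v \<in> I" "u \<noteq> v"
      then show "real (sigma2 V E) \<le> real (degree V E u) + real (degree V E v)"
        using \<open>I \<subseteq> V\<close> indep sigma2_le[OF assms(1)] by fastforce
    qed
    also have "\<dots> \<le> 2 * (real (card V) - 1)"
      using light by simp
    finally show ?thesis .
  next
    case False
    have "card V \<ge> 1"
      using assms(3) by (simp add: light_independent_set_def)
    then have "real (sigma2 V E) \<le> 2 * (real (card V) - 1)"
      using sigma2_le_twice_card_minus_1[OF assms(1,2)] by (simp add: of_nat_diff)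
    moreover have "real (card I) * real (sigma2 V E) \<le> real (sigma2 V E)"
      using False by (intro mult_left_le_one_le) auto
    ultimately show ?thesis
      by linarith
  qed
qed

theorem proposition1p7:
  fixes V :: "'a set" and E :: "'a \<Rightarrow> 'a \<Rightarrow> bool"
  assumes "simple_graph V E"
    and "V \<noteq> {}"
    and "\<not> complete_graph V E"
    and "min_degree V E \<ge> 1"
  shows "real (alpha_star V E) \<le> 2 * (real (card V) - 1) / real (sigma2 V E)"
proof -
  obtain I where "light_independent_set V E I" and "alpha_star V E = card I"
    using alpha_star_attained[OF assms(1,2)] .
  moreover have "sigma2 V E > 0"
    using sigma2_pos[OF assms(1,3,4)] .
  ultimately show ?thesis
    using light_independent_set_card_mult_sigma2_le[OF assms(1,3)]
    by (simp add: pos_le_divide_eq)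
qed

end
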